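(* Let $(Q,\cdot)$ be a quasigroup satisfying $x(y(yz))=(x(yy))z$ for all $x,y,z\in Q$ (an LC4-quasigroup). Then $Q$ satisfies $x(x(yz))=(x(xy))z$ for all $x,y,z\in Q$ (i.e. $Q$ is an LC2-quasigroup).
   Context: A quasigroup is a set $Q$ with a binary operation $\cdot$ (written as juxtaposition) such that for all $a,b\in Q$ each of the equations $ax=b$ and $ya=b$ has a unique solution in $Q$. *)

theory Defs
  imports Main
begin

definition quasigroup :: "'a set \<Rightarrow> ('a \<Rightarrow> 'a \<Rightarrow> 'a) \<Rightarrow> bool" where
  "quasigroup Q f \<longleftrightarrow>
     (\<forall>a\<in>Q. \<forall>b\<in>Q. f a b \<in> Q) \<and>
     (\<forall>a\<in>Q. \<forall>b\<in>Q. \<exists>!x. x \<in> Q \<and> f a x = b) \<and>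
     (\<forall>a\<in>Q. \<forall>b\<in>Q. \<exists>!y. y \<in> Q \<and> f y a = b)"

end

theory Submission
  imports Defs
begin

text \<open>Write \<open>L\<^sub>a\<close> for the left translation \<open>u \<mapsto> a u\<close>, a bijection of \<open>Q\<close>.
LC4 says \<open>L\<^sub>a L\<^sub>b L\<^sub>b = L\<^bsub>a(bb)\<^esub>\<close>. Choosing \<open>a'\<close> with \<open>a'(aa) = a\<close> shows that
\<open>L\<^bsub>a'\<^esub>\<close> inverts \<open>L\<^sub>a\<close>, so inverses of left translations are left translations.
Choosing \<open>w\<close> with \<open>w(xx) = y'\<close>, where \<open>L\<^bsub>y'\<^esub> = L\<^sub>y\<^sup>-\<^sup>1\<close>, gives
\<open>L\<^sub>w L\<^sub>x L\<^sub>x L\<^sub>y = id\<close>, so \<open>L\<^sub>x L\<^sub>x L\<^sub>y\<close> is a left translation \<open>L\<^sub>c\<close>. LC4 also yields a right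
identity \<open>e\<close>, and evaluating at \<open>e\<close> identifies \<open>c = x(xy)\<close>, which is LC2.\<close>

locale quasigroup_op =
  fixes Q :: "'a set" and mult :: "'a \<Rightarrow> 'a \<Rightarrow> 'a" (infixl "\<cdot>" 70)
  assumes quasigroup: "quasigroup Q (\<cdot>)"
begin

lemma closed [simp]: "a \<in> Q \<Longrightarrow> b \<in> Q \<Longrightarrow> a \<cdot> b \<in> Q"
  using quasigroup unfolding quasigroup_def by blast

lemma left_division_unique: "a \<in> Q \<Longrightarrow> b \<in> Q \<Longrightarrow> \<exists>!u. u \<in> Q \<and> a \<cdot> u = b"
  using quasigroup unfolding quasigroup_def by simp

lemma right_division_unique: "a \<in> Q \<Longrightarrow> b \<in> Q \<Longrightarrow> \<exists>!u. u \<in> Q \<and> u \<cdot> a = b"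
  using quasigroup unfolding quasigroup_def by simp

lemma left_solvable: "a \<in> Q \<Longrightarrow> b \<in> Q \<Longrightarrow> \<exists>u\<in>Q. a \<cdot> u = b"
  using left_division_unique by blast

lemma right_solvable: "a \<in> Q \<Longrightarrow> b \<in> Q \<Longrightarrow> \<exists>u\<in>Q. u \<cdot> a = b"
  using right_division_unique by blast

lemma left_cancel: "a \<in> Q \<Longrightarrow> b \<in> Q \<Longrightarrow> c \<in> Q \<Longrightarrow> a \<cdot> b = a \<cdot> c \<Longrightarrow> b = c"
  using left_division_unique[of a "a \<cdot> b"] by (metis closed)

end

locale lc4_quasigroup = quasigroup_op +
  assumes LC4: "x \<in> Q \<Longrightarrow> y \<in> Q \<Longrightarrow> z \<in> Q \<Longrightarrow> x \<cdot> (y \<cdot> (y \<cdot> z)) = (x \<cdot> (y \<cdot> y)) \<cdot> z"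
begin

lemma right_identity_exists:
  assumes "Q \<noteq> {}"
  shows "\<exists>e\<in>Q. \<forall>b\<in>Q. b \<cdot> e = b"
proof -
  obtain y where y: "y \<in> Q"
    using assms by blast
  obtain e where e: "e \<in> Q" "y \<cdot> e = y"
    using left_solvable[OF y y] by blast
  have "b \<cdot> e = b" if b: "b \<in> Q" for b
  proof -
    obtain a where a: "a \<in> Q" "a \<cdot> (y \<cdot> y) = b"
      using right_solvable[OF closed[OF y y] b] by blast
    have "b \<cdot> e = a \<cdot> (y \<cdot> (y \<cdot> e))"
      using LC4[OF a(1) y e(1)] a(2) by simp
    also have "\<dots> = b"
      using e(2) a(2) by simp
    finally show ?thesis .
  qed
  with e(1) show ?thesis by blast
qed

lemma left_translation_inverse:
  assumes a: "a \<in> Q"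
  shows "\<exists>a'\<in>Q. \<forall>u\<in>Q. a' \<cdot> (a \<cdot> u) = u \<and> a \<cdot> (a' \<cdot> u) = u"
proof -
  obtain a' where a': "a' \<in> Q" "a' \<cdot> (a \<cdot> a) = a"
    using right_solvable[OF closed[OF a a] a] by blast
  have left_inv: "a' \<cdot> (a \<cdot> u) = u" if u: "u \<in> Q" for u
  proof -
    obtain v where v: "v \<in> Q" "a \<cdot> v = u"
      using left_solvable[OF a u] by blast
    show ?thesis
      using LC4[OF a'(1) a v(1)] a'(2) v(2) by simp
  qed
  have "a \<cdot> (a' \<cdot> u) = u" if u: "u \<in> Q" for u
    using left_cancel[of a' "a \<cdot> (a' \<cdot> u)" u] left_inv[of "a' \<cdot> u"] a a'(1) u by simp
  with a'(1) left_inv show ?thesis by blast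
qed

lemma left_translation_xxy_is_left_translation:
  assumes x: "x \<in> Q" and y: "y \<in> Q"
  shows "\<exists>c\<in>Q. \<forall>u\<in>Q. x \<cdot> (x \<cdot> (y \<cdot> u)) = c \<cdot> u"
proof -
  obtain y' where y': "y' \<in> Q" "\<forall>u\<in>Q. y' \<cdot> (y \<cdot> u) = u"
    using left_translation_inverse[OF y] by blast
  obtain w where w: "w \<in> Q" "w \<cdot> (x \<cdot> x) = y'"
    using right_solvable[OF closed[OF x x] y'(1)] by blast
  obtain w' where w': "w' \<in> Q" "\<forall>u\<in>Q. w \<cdot> (w' \<cdot> u) = u"
    using left_translation_inverse[OF w(1)] by blast
  have "x \<cdot> (x \<cdot> (y \<cdot> u)) = w' \<cdot> u" if u: "u \<in> Q" for u
  proof (rule left_cancel[OF w(1)])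
    have "w \<cdot> (x \<cdot> (x \<cdot> (y \<cdot> u))) = y' \<cdot> (y \<cdot> u)"
      using LC4[OF w(1) x] w(2) u y by simp
    also have "\<dots> = w \<cdot> (w' \<cdot> u)"
      using y'(2) w'(2) u by simp
    finally show "w \<cdot> (x \<cdot> (x \<cdot> (y \<cdot> u))) = w \<cdot> (w' \<cdot> u)" .
  qed (use x y u w'(1) in simp_all)
  with w'(1) show ?thesis by blast
qed

lemma LC2:
  assumes x: "x \<in> Q" and y: "y \<in> Q" and z: "z \<in> Q"
  shows "x \<cdot> (x \<cdot> (y \<cdot> z)) = (x \<cdot> (x \<cdot> y)) \<cdot> z"
proof -
  obtain e where e: "e \<in> Q" "\<forall>b\<in>Q. b \<cdot> e = b"
    using right_identity_exists x by blast
  obtain c where c: "c \<in> Q" "\<forall>u\<in>Q. x \<cdot> (x \<cdot> (y \<cdot> u)) = c \<cdot> u"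
    using left_translation_xxy_is_left_translation[OF x y] by blast
  have "x \<cdot> (x \<cdot> y) = c"
    using c(2)[rule_format, OF e(1)] e(2) c(1) y by simp
  with c(2) z show ?thesis by simp
qed

end

theorem mainTheorem8:
  fixes Q :: "'a set" and f :: "'a \<Rightarrow> 'a \<Rightarrow> 'a"
  assumes "quasigroup Q f"
    and LC4: "\<forall>x\<in>Q. \<forall>y\<in>Q. \<forall>z\<in>Q. f x (f y (f y z)) = f (f x (f y y)) z"
  shows "\<forall>x\<in>Q. \<forall>y\<in>Q. \<forall>z\<in>Q. f x (f x (f y z)) = f (f x (f x y)) z"
proof -
  interpret lc4_quasigroup Q f
    using assms by unfold_locales blast+
  show ?thesis
    using LC2 by blast
qed

end
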